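(* Let $\phi$ be an absolutely bounded, Lipschitz and internally stable feature map with constants $v_1,v_2,v_3$, let $R=[0,1]^2$, and let $\mathcal{X}$ be a bi-filtration of size $n$. Let $s\in\mathbb{N}$, $u=2^{-s}$, and let $(B_1,B_2)$ be a box pair with centers $c_1<c_2$. Then for all $(p,q)\in B_1\times B_2$ with $p<q$, $$|\Phi_{\mathcal{X}}(p,q)-\Phi_{\mathcal{X}}(c_1,c_2)|\le\frac{v_3 n}{\sqrt2}D+v_1 nW+v_2 nL.$$
   Context: For $p,q\in\mathbb{R}^2$ write $p\le q$ (resp. $p<q$) if both coordinates satisfy $\le$ (resp. $<$). A mono-filtration of a finite simplicial complex $X$ assigns nested subcomplexes $\mathcal{X}(\alpha)$, $\alpha\in\mathbb{R}$; its size is the number of simplices. A bi-filtration $\mathcal{X}$ assigns to $p\in\mathbb{R}^2$ a subcomplex $\mathcal{X}(p)$ with $\mathcal{X}(p)\subseteq\mathcal{X}(q)$ for $p\le q$; it is tame, and its size is the total number of critical points over all simplices (where $p$ is critical for $\sigma$ if for every $\epsilon>0$, $\sigma\notin\mathcal{X}(p_1-\epsilon,p_2)\cup\mathcal{X}(p_1,p_2-\epsilon)$ and $\sigma\in\mathcal{X}(p_1+\epsilon,p_2)\cap\mathcal{X}(p_1,p_2+\epsilon)$); every slice of a bi-filtration of size $n$ has size at most $n$. Let $\mathcal{L}$ be the set of non-vertical lines in $\mathbb{R}^2$ with positive slope ("slices"); each $\ell\in\mathcal{L}$ meets $x=-y$ in a unique point $b$ and is parametrized as $b+\lambda a$ with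 $a=(a_1,a_2)$ its unit direction vector with positive coordinates; its weight is $\hat{\ell}:=\min\{a_1,a_2\}$; for a point $p\in\ell$, $\lambda_p$ denotes the parameter with $p=b+\lambda_pa$; the slice $\mathcal{X}_\ell$ is the mono-filtration $\alpha\mapsto\mathcal{X}(b+\alpha a)$. $d_B$ is the bottleneck distance between persistence diagrams of mono-filtrations. $\Delta^{(1)}:=\{(x_1,x_2):x_1<x_2\}$. A feature map $\phi$ assigns to each mono-filtration $\mathcal{X}$ a function $\phi_{\mathcal{X}}\in L^2(\Delta^{(1)})$; absolutely bounded: $0\le\phi_{\mathcal{X}}(x)\le v_1n$; Lipschitz: $|\phi_{\mathcal{X}}(x)-\phi_{\mathcal{X}}(x')|\le v_2n\|x-x'\|_2$; internally stable: $|\phi_{\mathcal{X}}(x)-\phi_{\mathcal{Y}}(x)|\le v_3n\,d_B(\mathcal{X},\mathcal{Y})$; each for all mono-filtrations of size $n$ and all $x,x'\in\Delta^{(1)}$. $\Delta^{(2)}:=\{(p,q)\in\mathbb{R}^2\times\mathbb{R}^2:p<q\}$; for $(p,q)\in\Delta^{(2)}$ with $\ell$ the line through $p,q$, $\Phi_{\mathcal{X}}(p,q):=\chi_R(p)\chi_R(q)\,\hat{\ell}\,\phi_{\mathcal{X}_\ell}(\lambda_p,\lambda_q)$. Boxes: $R$ is split into $2^s\times2^s$ congruent closed squares of side $u$; a box pair is an ordered pair $(B_1,B_2)$ of such boxes, with centers $c_1,c_2$. A slice $\ell\in\mathcal{L}$ traverses $(B_1,B_2)$ if it meets both $B_1$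 and $B_2$; the center slice $\ell_c$ is the line through $c_1$ and $c_2$. $D$ is the supremum of $d_B(\mathcal{X}_{\ell_c},\mathcal{X}_\ell)$ over all slices $\ell$ traversing $(B_1,B_2)$; $W$ is the supremum of $|\hat{\ell_c}-\hat{\ell}|$ over traversing slices $\ell$; $L_1$ is the supremum of $|\lambda_p-\lambda_{c_1}|$ over traversing slices $\ell$ and points $p\in\ell\cap B_1$ (with $\lambda_p$ along $\ell$ and $\lambda_{c_1}$ along $\ell_c$), $L_2$ is defined likewise with $B_2$ and $c_2$, and $L:=\max\{L_1,L_2\}$. *)

theory Defs
  imports "HOL-Analysis.Analysis" "HOL-Library.Extended_Real"
begin

definition simplicial_complex :: "'v set set \<Rightarrow> bool" where
  "simplicial_complex K \<longleftrightarrow> finite K \<and>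
     (\<forall>\<sigma>\<in>K. finite \<sigma> \<and> \<sigma> \<noteq> {} \<and> (\<forall>\<tau>. \<tau> \<noteq> {} \<and> \<tau> \<subseteq> \<sigma> \<longrightarrow> \<tau> \<in> K))"

definition subcomplex :: "'v set set \<Rightarrow> 'v set set \<Rightarrow> bool" where
  "subcomplex L K \<longleftrightarrow> L \<subseteq> K \<and> (\<forall>\<sigma>\<in>L. \<forall>\<tau>. \<tau> \<noteq> {} \<and> \<tau> \<subseteq> \<sigma> \<longrightarrow> \<tau> \<in> L)"

definition mono_filtration :: "(real \<Rightarrow> 'v set set) \<Rightarrow> bool" where
  "mono_filtration F \<longleftrightarrow> (\<exists>K. simplicial_complex K \<and> (\<forall>\<alpha>. subcomplex (F \<alpha>) K) \<and>
     (\<forall>\<alpha> \<beta>. \<alpha> \<le> \<beta> \<longrightarrow> F \<alpha> \<subseteq> F \<beta>) \<and>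
     (\<forall>\<sigma>\<in>K. (\<forall>\<alpha>. \<sigma> \<notin> F \<alpha>) \<or> (\<exists>t. \<forall>\<alpha>. \<sigma> \<in> F \<alpha> \<longleftrightarrow> t \<le> \<alpha>)))"

definition mf_size :: "(real \<Rightarrow> 'v set set) \<Rightarrow> nat" where
  "mf_size F = card (\<Union>\<alpha>. F \<alpha>)"

section \<open>Simplicial homology over GF(2); chains are sets of simplices\<close>

definition ksimp :: "'v set set \<Rightarrow> nat \<Rightarrow> 'v set set" where
  "ksimp K k = {\<sigma>\<in>K. card \<sigma> = Suc k}"

definition bdry :: "'v set set \<Rightarrow> 'v set set" where
  "bdry c = {\<tau>. \<tau> \<noteq> {} \<and> odd (card {\<sigma>\<in>c. \<tau> \<subseteq> \<sigma> \<and> card \<sigma> = Suc (card \<tau>)})}"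

definition cycles :: "'v set set \<Rightarrow> nat \<Rightarrow> 'v set set set" where
  "cycles K k = {c. c \<subseteq> ksimp K k \<and> bdry c = {}}"

definition boundaries :: "'v set set \<Rightarrow> nat \<Rightarrow> 'v set set set" where
  "boundaries L k = bdry ` {c. c \<subseteq> ksimp L (Suc k)}"

text \<open>Rank of the map H_k(K) to H_k(L) induced by inclusion (K subcomplex of L), over GF(2):
  dim Z_k(K) - dim (Z_k(K) \<inter> B_k(L)); dimensions of GF(2)-spaces are log2 of cardinalities.\<close>
definition hom_rank :: "'v set set \<Rightarrow> 'v set set \<Rightarrow> nat \<Rightarrow> real" where
  "hom_rank K L k = log 2 (card (cycles K k)) - log 2 (card (cycles K k \<inter> boundaries L k))"

definition pers_rank :: "(real \<Rightarrow> 'v set set) \<Rightarrow> nat \<Rightarrow> real \<Rightarrow> real \<Rightarrow> real" where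
  "pers_rank F k s t = hom_rank (F s) (F t) k"

definition pd_mult :: "(real \<Rightarrow> 'v set set) \<Rightarrow> nat \<Rightarrow> real \<Rightarrow> ereal \<Rightarrow> real" where
  "pd_mult F k b d =
     (if ereal b < d then
        (case d of
           ereal e \<Rightarrow> Lim (at_right 0) (\<lambda>\<epsilon>. pers_rank F k b (e - \<epsilon>) - pers_rank F k (b - \<epsilon>) (e - \<epsilon>)
                                          - pers_rank F k b e + pers_rank F k (b - \<epsilon>) e)
         | PInfty \<Rightarrow> Lim at_top (\<lambda>T. Lim (at_right 0) (\<lambda>\<epsilon>. pers_rank F k b T - pers_rank F k (b - \<epsilon>) T))
         | MInfty \<Rightarrow> 0)
      else 0)"

definition dgm_list :: "(real \<Rightarrow> 'v set set) \<Rightarrow> nat \<Rightarrow> (real \<times> ereal) list \<Rightarrow> bool" where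
  "dgm_list F k xs \<longleftrightarrow> (\<forall>x. real (count_list xs x) = pd_mult F k (fst x) (snd x))"

definition pt_cost :: "real \<times> ereal \<Rightarrow> real \<times> ereal \<Rightarrow> ereal" where
  "pt_cost x y = max (ereal \<bar>fst x - fst y\<bar>) (if snd x = snd y then 0 else \<bar>snd x - snd y\<bar>)"

definition diag_cost :: "real \<times> ereal \<Rightarrow> ereal" where
  "diag_cost x = (snd x - ereal (fst x)) / 2"

definition matching :: "(nat \<times> nat) set \<Rightarrow> 'a list \<Rightarrow> 'b list \<Rightarrow> bool" where
  "matching M xs ys \<longleftrightarrow> M \<subseteq> {..<length xs} \<times> {..<length ys} \<and>
     (\<forall>m\<in>M. \<forall>m'\<in>M. fst m = fst m' \<longleftrightarrow> snd m = snd m')"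

definition match_cost :: "(real \<times> ereal) list \<Rightarrow> (real \<times> ereal) list \<Rightarrow> (nat \<times> nat) set \<Rightarrow> ereal" where
  "match_cost xs ys M = max 0 (Sup ((\<lambda>m. pt_cost (xs ! fst m) (ys ! snd m)) ` M
      \<union> (\<lambda>i. diag_cost (xs ! i)) ` ({..<length xs} - fst ` M)
      \<union> (\<lambda>j. diag_cost (ys ! j)) ` ({..<length ys} - snd ` M)))"

definition bottleneck :: "nat \<Rightarrow> (real \<Rightarrow> 'v set set) \<Rightarrow> (real \<Rightarrow> 'v set set) \<Rightarrow> ereal" where
  "bottleneck k F G = (INF t \<in> {(xs, ys, M). dgm_list F k xs \<and> dgm_list G k ys \<and> matching M xs ys}.
                          match_cost (fst t) (fst (snd t)) (snd (snd t)))"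

definition le2 :: "real \<times> real \<Rightarrow> real \<times> real \<Rightarrow> bool" where
  "le2 p q \<longleftrightarrow> fst p \<le> fst q \<and> snd p \<le> snd q"

definition lt2 :: "real \<times> real \<Rightarrow> real \<times> real \<Rightarrow> bool" where
  "lt2 p q \<longleftrightarrow> fst p < fst q \<and> snd p < snd q"

definition is_critical :: "(real \<times> real \<Rightarrow> 'v set set) \<Rightarrow> 'v set \<Rightarrow> real \<times> real \<Rightarrow> bool" where
  "is_critical X \<sigma> p \<longleftrightarrow> (\<forall>\<epsilon>>0.
      \<sigma> \<notin> X (fst p - \<epsilon>, snd p) \<union> X (fst p, snd p - \<epsilon>) \<and>
      \<sigma> \<in> X (fst p + \<epsilon>, snd p) \<inter> X (fst p, snd p + \<epsilon>))"

definition bifiltration :: "'v set set \<Rightarrow> (real \<times> real \<Rightarrow> 'v set set) \<Rightarrow> bool" where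
  "bifiltration K X \<longleftrightarrow> simplicial_complex K \<and> (\<forall>p. subcomplex (X p) K) \<and>
     (\<forall>p q. le2 p q \<longrightarrow> X p \<subseteq> X q)"

definition tame_bifiltration :: "'v set set \<Rightarrow> (real \<times> real \<Rightarrow> 'v set set) \<Rightarrow> bool" where
  "tame_bifiltration K X \<longleftrightarrow> bifiltration K X \<and>
     (\<forall>\<sigma>\<in>K. finite {p. is_critical X \<sigma> p} \<and> (\<forall>q. \<sigma> \<in> X q \<longleftrightarrow> (\<exists>p. is_critical X \<sigma> p \<and> le2 p q)))"

definition bf_size :: "'v set set \<Rightarrow> (real \<times> real \<Rightarrow> 'v set set) \<Rightarrow> nat" where
  "bf_size K X = (\<Sum>\<sigma>\<in>K. card {p. is_critical X \<sigma> p})"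

definition is_slice :: "real \<times> real \<Rightarrow> real \<times> real \<Rightarrow> bool" where
  "is_slice b a \<longleftrightarrow> fst b + snd b = 0 \<and> fst a > 0 \<and> snd a > 0 \<and> (fst a)\<^sup>2 + (snd a)\<^sup>2 = 1"

definition on_line :: "real \<times> real \<Rightarrow> real \<times> real \<Rightarrow> real \<times> real \<Rightarrow> bool" where
  "on_line b a p \<longleftrightarrow> (\<exists>t::real. p = b + t *\<^sub>R a)"

definition lam :: "real \<times> real \<Rightarrow> real \<times> real \<Rightarrow> real \<times> real \<Rightarrow> real" where
  "lam b a p = (fst p - fst b) * fst a + (snd p - snd b) * snd a"

definition slice_weight :: "real \<times> real \<Rightarrow> real" where
  "slice_weight a = min (fst a) (snd a)"

definition slice :: "(real \<times> real \<Rightarrow> 'v set set) \<Rightarrow> real \<times> real \<Rightarrow> real \<times> real \<Rightarrow> real \<Rightarrow> 'v set set" where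
  "slice X b a = (\<lambda>\<alpha>. X (b + \<alpha> *\<^sub>R a))"

definition line_dir :: "real \<times> real \<Rightarrow> real \<times> real \<Rightarrow> real \<times> real" where
  "line_dir p q = (1 / norm (q - p)) *\<^sub>R (q - p)"

definition line_base :: "real \<times> real \<Rightarrow> real \<times> real \<Rightarrow> real \<times> real" where
  "line_base p q = p - ((fst p + snd p) / (fst (line_dir p q) + snd (line_dir p q))) *\<^sub>R line_dir p q"

definition Delta1 :: "(real \<times> real) set" where
  "Delta1 = {x. fst x < snd x}"

definition unit_square :: "(real \<times> real) set" where
  "unit_square = {0..1} \<times> {0..1}"

definition Phi :: "((real \<Rightarrow> 'v set set) \<Rightarrow> real \<times> real \<Rightarrow> real) \<Rightarrow> (real \<times> real \<Rightarrow> 'v set set)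
                    \<Rightarrow> real \<times> real \<Rightarrow> real \<times> real \<Rightarrow> real" where
  "Phi \<phi> X p q = (let a = line_dir p q; b = line_base p q in
     indicator unit_square p * indicator unit_square q * slice_weight a *
     \<phi> (slice X b a) (lam b a p, lam b a q))"

definition box_sq :: "nat \<Rightarrow> nat \<Rightarrow> nat \<Rightarrow> (real \<times> real) set" where
  "box_sq s i j = {real i / 2^s .. (real i + 1) / 2^s} \<times> {real j / 2^s .. (real j + 1) / 2^s}"

definition box_center :: "nat \<Rightarrow> nat \<Rightarrow> nat \<Rightarrow> real \<times> real" where
  "box_center s i j = ((real i + 1/2) / 2^s, (real j + 1/2) / 2^s)"

definition traverses :: "(real \<times> real) set \<Rightarrow> (real \<times> real) set \<Rightarrow> real \<times> real \<Rightarrow> real \<times> real \<Rightarrow> bool" where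
  "traverses B1 B2 b a \<longleftrightarrow> is_slice b a \<and> (\<exists>p\<in>B1. on_line b a p) \<and> (\<exists>q\<in>B2. on_line b a q)"

definition D_box :: "nat \<Rightarrow> (real \<times> real \<Rightarrow> 'v set set) \<Rightarrow> (real \<times> real) set \<Rightarrow> (real \<times> real) set
                     \<Rightarrow> real \<times> real \<Rightarrow> real \<times> real \<Rightarrow> ereal" where
  "D_box k X B1 B2 c1 c2 = (SUP ba \<in> {(b, a). traverses B1 B2 b a}.
      bottleneck k (slice X (line_base c1 c2) (line_dir c1 c2)) (slice X (fst ba) (snd ba)))"

definition W_box :: "(real \<times> real) set \<Rightarrow> (real \<times> real) set \<Rightarrow> real \<times> real \<Rightarrow> real \<times> real \<Rightarrow> ereal" where
  "W_box B1 B2 c1 c2 = (SUP ba \<in> {(b, a). traverses B1 B2 b a}.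
      ereal \<bar>slice_weight (line_dir c1 c2) - slice_weight (snd ba)\<bar>)"

definition L_box :: "(real \<times> real) set \<Rightarrow> (real \<times> real) set \<Rightarrow> (real \<times> real) set \<Rightarrow> real \<times> real \<Rightarrow> real \<times> real
                     \<Rightarrow> real \<times> real \<Rightarrow> ereal" where
  "L_box B1 B2 Bi c1 c2 ci = (SUP t \<in> {(b, a, p). traverses B1 B2 b a \<and> p \<in> Bi \<and> on_line b a p}.
      ereal \<bar>lam (fst t) (fst (snd t)) (snd (snd t)) - lam (line_base c1 c2) (line_dir c1 c2) ci\<bar>)"

end

theory Submission
  imports Defs
begin

text \<open>Along the line through \<open>p < q\<close>, \<open>\<Phi>(p, q)\<close> is the weight \<open>w\<close> of the slice times
  \<open>\<phi>\<close> of the slice filtration \<open>F\<close> at \<open>x = (\<lambda>\<^sub>p, \<lambda>\<^sub>q)\<close>; likewise \<open>\<Phi>(c\<^sub>1, c\<^sub>2) = w' \<phi>(F', x')\<close>.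
  By the triangle inequality
  \<open>|w \<phi>(F, x) - w' \<phi>(F', x')| \<le> |w - w'| \<phi>(F, x) + w' |\<phi>(F, x) - \<phi>(F', x)| + w' |\<phi>(F', x) - \<phi>(F', x')|\<close>,
  and the three terms are controlled by absolute boundedness, internal stability and the
  Lipschitz property, using \<open>w' \<le> 1/\<surd>2\<close> and \<open>\<parallel>x - x'\<parallel> \<le> \<surd>2 max(|\<lambda>\<^sub>p - \<lambda>\<^sub>c\<^sub>1|, |\<lambda>\<^sub>q - \<lambda>\<^sub>c\<^sub>2|)\<close>.
  Every slice of a tame bi-filtration contains exactly the simplices having a critical point,
  so all slices have the same size, which is at most \<open>n\<close>.\<close>

lemma slice_through_points:
  assumes "lt2 p q"
  shows "is_slice (line_base p q) (line_dir p q)"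
    and "on_line (line_base p q) (line_dir p q) p"
    and "on_line (line_base p q) (line_dir p q) q"
    and "(lam (line_base p q) (line_dir p q) p, lam (line_base p q) (line_dir p q) q) \<in> Delta1"
proof -
  define d where "d = q - p"
  define N where "N = norm d"
  have d_pos: "fst d > 0" "snd d > 0" using assms by (auto simp: lt2_def d_def)
  have N: "N = sqrt ((fst d)\<^sup>2 + (snd d)\<^sup>2)"
    unfolding N_def by (metis norm_Pair prod.collapse real_norm_def power2_abs)
  have N_pos: "N > 0" using d_pos N by (simp add: add_pos_pos)
  have a: "line_dir p q = (fst d / N, snd d / N)"
    unfolding line_dir_def N_def d_def by (simp add: scaleR_prod_def)
  have a_pos: "fst (line_dir p q) > 0" "snd (line_dir p q) > 0" using a N_pos d_pos by auto
  have "(fst (line_dir p q))\<^sup>2 + (snd (line_dir p q))\<^sup>2 = ((fst d)\<^sup>2 + (snd d)\<^sup>2) / N\<^sup>2"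
    using a by (simp add: power_divide add_divide_distrib)
  also have "\<dots> = 1" using N N_pos d_pos by (simp add: N)
  finally show "is_slice (line_base p q) (line_dir p q)"
    unfolding is_slice_def using a_pos by (simp add: line_base_def field_simps)
  show "on_line (line_base p q) (line_dir p q) p"
    unfolding on_line_def line_base_def
    by (rule exI[of _ "(fst p + snd p) / (fst (line_dir p q) + snd (line_dir p q))"]) simp
  show "on_line (line_base p q) (line_dir p q) q"
    unfolding on_line_def line_base_def
    by (rule exI[of _ "(fst p + snd p) / (fst (line_dir p q) + snd (line_dir p q)) + N"])
      (use N_pos in \<open>simp add: algebra_simps line_dir_def N_def d_def\<close>)
  have "lam (line_base p q) (line_dir p q) q - lam (line_base p q) (line_dir p q) p
      = fst d * fst (line_dir p q) + snd d * snd (line_dir p q)"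
    unfolding lam_def d_def by (simp add: algebra_simps)
  also have "\<dots> > 0" using d_pos a_pos by (simp add: add_pos_pos)
  finally show "(lam (line_base p q) (line_dir p q) p, lam (line_base p q) (line_dir p q) q) \<in> Delta1"
    by (simp add: Delta1_def)
qed

lemma slice_weight_nonneg: "is_slice b a \<Longrightarrow> 0 \<le> slice_weight a"
  by (simp add: is_slice_def slice_weight_def)

lemma slice_weight_mult_sqrt2_le:
  assumes "is_slice b a"
  shows "slice_weight a * sqrt 2 \<le> 1"
proof -
  have a: "fst a > 0" "snd a > 0" "(fst a)\<^sup>2 + (snd a)\<^sup>2 = 1"
    using assms by (auto simp: is_slice_def)
  have "(slice_weight a)\<^sup>2 \<le> fst a * snd a"
    using a by (auto simp: slice_weight_def min_def power2_eq_square intro: mult_mono)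
  also have "\<dots> \<le> 1/2" using a sum_squares_bound[of "fst a" "snd a"] by simp
  finally have "sqrt (2 * (slice_weight a)\<^sup>2) \<le> 1" by simp
  then show ?thesis
    using slice_weight_nonneg[OF assms] by (simp add: real_sqrt_mult mult.commute)
qed

lemma norm_Pair_le_sqrt2_max:
  fixes x y :: real
  shows "norm (x, y) \<le> sqrt 2 * max \<bar>x\<bar> \<bar>y\<bar>"
proof -
  define M where "M = max \<bar>x\<bar> \<bar>y\<bar>"
  have "x\<^sup>2 \<le> M\<^sup>2" "y\<^sup>2 \<le> M\<^sup>2"
    unfolding M_def by (metis abs_ge_zero max.cobounded1 max.cobounded2 power2_abs power_mono)+
  then have "sqrt (x\<^sup>2 + y\<^sup>2) \<le> sqrt (2 * M\<^sup>2)" by simp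
  also have "\<dots> = sqrt 2 * M" by (simp add: real_sqrt_mult M_def)
  finally show ?thesis by (simp add: norm_Pair M_def)
qed

definition push_param :: "real \<times> real \<Rightarrow> real \<times> real \<Rightarrow> real \<times> real \<Rightarrow> real" where
  "push_param b a p = max ((fst p - fst b) / fst a) ((snd p - snd b) / snd a)"

lemma le2_line_iff_push_param:
  assumes "fst a > 0" "snd a > 0"
  shows "le2 p (b + \<alpha> *\<^sub>R a) \<longleftrightarrow> push_param b a p \<le> \<alpha>"
  using assms by (simp add: le2_def push_param_def pos_divide_le_eq algebra_simps)

lemma mono_filtration_slice:
  assumes "tame_bifiltration K X" "is_slice b a"
  shows "mono_filtration (slice X b a)"
proof -
  have bif: "bifiltration K X"
    and tame: "\<forall>\<sigma>\<in>K. finite {p. is_critical X \<sigma> p} \<and> (\<forall>q. \<sigma> \<in> X q \<longleftrightarrow> (\<exists>p. is_critical X \<sigma> p \<and> le2 p q))"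
    using assms(1) unfolding tame_bifiltration_def by blast+
  have crit: "finite {p. is_critical X \<sigma> p}" if "\<sigma> \<in> K" for \<sigma>
    using tame that by blast
  have mem: "\<sigma> \<in> X q \<longleftrightarrow> (\<exists>p. is_critical X \<sigma> p \<and> le2 p q)" if "\<sigma> \<in> K" for \<sigma> q
    using tame that by blast
  have a: "fst a > 0" "snd a > 0" using assms(2) by (auto simp: is_slice_def)
  have mono: "slice X b a \<alpha> \<subseteq> slice X b a \<beta>" if "\<alpha> \<le> \<beta>" for \<alpha> \<beta>
  proof -
    have "le2 (b + \<alpha> *\<^sub>R a) (b + \<beta> *\<^sub>R a)"
      using a that by (simp add: le2_def mult_right_mono)
    then show ?thesis
      using bif unfolding bifiltration_def slice_def by blast
  qed
  have entry: "(\<forall>\<alpha>. \<sigma> \<notin> slice X b a \<alpha>) \<or> (\<exists>t. \<forall>\<alpha>. \<sigma> \<in> slice X b a \<alpha> \<longleftrightarrow> t \<le> \<alpha>)"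
    if "\<sigma> \<in> K" for \<sigma>
  proof (cases "{p. is_critical X \<sigma> p} = {}")
    case True
    then show ?thesis using mem[OF that] by (simp add: slice_def)
  next
    case False
    define P where "P = {p. is_critical X \<sigma> p}"
    have "\<sigma> \<in> slice X b a \<alpha> \<longleftrightarrow> (\<exists>p\<in>P. push_param b a p \<le> \<alpha>)" for \<alpha>
      using mem[OF that] le2_line_iff_push_param[OF a] by (simp add: slice_def P_def)
    also have "\<dots> \<alpha> \<longleftrightarrow> Min (push_param b a ` P) \<le> \<alpha>" for \<alpha>
      using crit[OF that] False by (simp add: P_def Min_le_iff)
    finally show ?thesis by blast
  qed
  have "simplicial_complex K" and "\<And>p. subcomplex (X p) K"
    using bif unfolding bifiltration_def by blast+
  then show ?thesis
    unfolding mono_filtration_def using mono entry by (intro exI[of _ K]) (simp add: slice_def)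
qed

lemma Union_slice:
  assumes "tame_bifiltration K X" "is_slice b a"
  shows "(\<Union>\<alpha>. slice X b a \<alpha>) = {\<sigma>\<in>K. \<exists>p. is_critical X \<sigma> p}"
proof -
  have sub: "X q \<subseteq> K" for q
    using assms(1) unfolding tame_bifiltration_def bifiltration_def subcomplex_def by blast
  have mem: "\<sigma> \<in> X q \<longleftrightarrow> (\<exists>p. is_critical X \<sigma> p \<and> le2 p q)" if "\<sigma> \<in> K" for \<sigma> q
    using assms(1) that unfolding tame_bifiltration_def by blast
  have a: "fst a > 0" "snd a > 0" using assms(2) by (auto simp: is_slice_def)
  have push: "le2 p (b + push_param b a p *\<^sub>R a)" for p
    using le2_line_iff_push_param[OF a] by simp
  have "\<sigma> \<in> slice X b a (push_param b a p)" if "\<sigma> \<in> K" "is_critical X \<sigma> p" for \<sigma> p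
    unfolding slice_def using mem[OF that(1)] that(2) push by blast
  moreover have "\<sigma> \<in> K \<and> (\<exists>p. is_critical X \<sigma> p)" if "\<sigma> \<in> slice X b a \<alpha>" for \<sigma> \<alpha>
    using that sub mem unfolding slice_def by blast
  ultimately show ?thesis
    by blast
qed

lemma mf_size_slice:
  assumes "tame_bifiltration K X" "is_slice b a"
  shows "mf_size (slice X b a) = card {\<sigma>\<in>K. \<exists>p. is_critical X \<sigma> p}"
  unfolding mf_size_def using Union_slice[OF assms] by simp

lemma card_critical_simplices_le_bf_size:
  assumes "tame_bifiltration K X"
  shows "card {\<sigma>\<in>K. \<exists>p. is_critical X \<sigma> p} \<le> bf_size K X"
proof -
  have fin_K: "finite K"
    using assms by (simp add: tame_bifiltration_def bifiltration_def simplicial_complex_def)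
  have fin_crit: "\<And>\<sigma>. \<sigma> \<in> K \<Longrightarrow> finite {p. is_critical X \<sigma> p}"
    using assms by (simp add: tame_bifiltration_def)
  have "card {\<sigma>\<in>K. \<exists>p. is_critical X \<sigma> p} = (\<Sum>\<sigma>\<in>{\<sigma>\<in>K. \<exists>p. is_critical X \<sigma> p}. 1)"
    by simp
  also have "\<dots> \<le> (\<Sum>\<sigma>\<in>{\<sigma>\<in>K. \<exists>p. is_critical X \<sigma> p}. card {p. is_critical X \<sigma> p})"
    using fin_crit by (intro sum_mono) (auto simp: Suc_le_eq card_gt_0_iff)
  also have "\<dots> \<le> bf_size K X"
    unfolding bf_size_def by (rule sum_mono2[OF fin_K]) auto
  finally show ?thesis .
qed

lemma bottleneck_nonneg: "0 \<le> bottleneck k F G"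
  unfolding bottleneck_def match_cost_def by (rule INF_greatest) simp

lemma abs_weighted_diff_le:
  fixes w w' f g h :: real
  assumes "0 \<le> w'" "0 \<le> f"
  shows "\<bar>w * f - w' * g\<bar> \<le> \<bar>w - w'\<bar> * f + w' * \<bar>f - h\<bar> + w' * \<bar>h - g\<bar>"
proof -
  have "w * f - w' * g = (w - w') * f + w' * (f - h) + w' * (h - g)"
    by (simp add: algebra_simps)
  then show ?thesis
    using assms abs_triangle_ineq[of "(w - w') * f + w' * (f - h)" "w' * (h - g)"]
      abs_triangle_ineq[of "(w - w') * f" "w' * (f - h)"]
    by (simp add: abs_mult)
qed

lemma ereal_scaled_le:
  assumes "ereal t \<le> ereal c * \<beta>" "0 \<le> w" "0 \<le> c" "w * c \<le> c'" "0 \<le> \<beta>"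
  shows "ereal (w * t) \<le> ereal c' * \<beta>"
proof (cases \<beta>)
  case (real r)
  then have "w * t \<le> w * (c * r)"
    using assms(1,2) by (simp add: mult_left_mono)
  also have "\<dots> \<le> c' * r"
    using assms(4,5) real mult_right_mono[OF assms(4), of r] by (simp add: mult.assoc)
  finally show ?thesis using real by simp
next
  case PInf
  show ?thesis
  proof (cases "c' > 0")
    case True
    then show ?thesis using PInf by simp
  next
    case False
    then have "w * c = 0" "c' = 0"
      using assms(2-4) by (smt (verit) mult_nonneg_nonneg)+
    moreover have "t \<le> 0" if "c = 0"
      using assms(1) PInf that by simp
    ultimately show ?thesis
      using PInf assms(2) by (auto simp: mult_nonneg_nonpos)
  qed
qed (use assms(5) in simp)

locale stable_feature_map =
  fixes \<phi> :: "(real \<Rightarrow> 'v set set) \<Rightarrow> real \<times> real \<Rightarrow> real"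
    and v1 v2 v3 :: real and k :: nat
  assumes abs_bounded: "\<And>F x. mono_filtration F \<Longrightarrow> x \<in> Delta1 \<Longrightarrow>
               0 \<le> \<phi> F x \<and> \<phi> F x \<le> v1 * real (mf_size F)"
    and lipschitz: "\<And>F x x'. mono_filtration F \<Longrightarrow> x \<in> Delta1 \<Longrightarrow> x' \<in> Delta1 \<Longrightarrow>
               \<bar>\<phi> F x - \<phi> F x'\<bar> \<le> v2 * real (mf_size F) * norm (x - x')"
    and int_stable: "\<And>F G x. mono_filtration F \<Longrightarrow> mono_filtration G \<Longrightarrow> mf_size F = mf_size G \<Longrightarrow>
               x \<in> Delta1 \<Longrightarrow>
               ereal \<bar>\<phi> F x - \<phi> G x\<bar> \<le> ereal (v3 * real (mf_size F)) * bottleneck k F G"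
    and v_nonneg: "0 \<le> v1" "0 \<le> v2" "0 \<le> v3"

lemma (in stable_feature_map) Phi_diff_le:
  assumes bif: "tame_bifiltration K X"
    and pq: "lt2 p q" and pq': "lt2 p' q'"
    and in_R: "p \<in> unit_square" "q \<in> unit_square" "p' \<in> unit_square" "q' \<in> unit_square"
  defines "a \<equiv> line_dir p q" and "b \<equiv> line_base p q"
    and "a' \<equiv> line_dir p' q'" and "b' \<equiv> line_base p' q'"
  shows "ereal \<bar>Phi \<phi> X p q - Phi \<phi> X p' q'\<bar>
    \<le> ereal (v3 * real (bf_size K X) / sqrt 2) * bottleneck k (slice X b' a') (slice X b a)
      + ereal (v1 * real (bf_size K X)) * ereal \<bar>slice_weight a' - slice_weight a\<bar>
      + ereal (v2 * real (bf_size K X))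
          * ereal (max \<bar>lam b a p - lam b' a' p'\<bar> \<bar>lam b a q - lam b' a' q'\<bar>)"
proof -
  define F F' where "F = slice X b a" and "F' = slice X b' a'"
  define x x' where "x = (lam b a p, lam b a q)" and "x' = (lam b' a' p', lam b' a' q')"
  define w w' where "w = slice_weight a" and "w' = slice_weight a'"
  define n m where "n = real (bf_size K X)" and "m = real (mf_size F)"
  define M where "M = max \<bar>lam b a p - lam b' a' p'\<bar> \<bar>lam b a q - lam b' a' q'\<bar>"
  have sl: "is_slice b a" "is_slice b' a'" and x: "x \<in> Delta1" "x' \<in> Delta1"
    using slice_through_points[OF pq] slice_through_points[OF pq']
    by (simp_all add: a_def b_def a'_def b'_def x_def x'_def)
  have F: "mono_filtration F" "mono_filtration F'"
    using mono_filtration_slice[OF bif] sl by (simp_all add: F_def F'_def)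
  have size: "mf_size F' = mf_size F" "m \<le> n"
    using mf_size_slice[OF bif] sl card_critical_simplices_le_bf_size[OF bif]
    by (simp_all add: F_def F'_def m_def n_def)
  have Phi: "Phi \<phi> X p q = w * \<phi> F x" "Phi \<phi> X p' q' = w' * \<phi> F' x'"
    using in_R by (simp_all add: Phi_def Let_def a_def b_def a'_def b'_def F_def F'_def
        x_def x'_def w_def w'_def)
  have w': "0 \<le> w'" "w' * sqrt 2 \<le> 1"
    using slice_weight_nonneg[OF sl(2)] slice_weight_mult_sqrt2_le[OF sl(2)] by (simp_all add: w'_def)
  have \<phi>_bounds: "0 \<le> \<phi> F x" "\<phi> F x \<le> v1 * m"
    using abs_bounded[OF F(1) x(1)] by (simp_all add: m_def)
  have split: "\<bar>Phi \<phi> X p q - Phi \<phi> X p' q'\<bar>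
      \<le> \<bar>w - w'\<bar> * \<phi> F x + w' * \<bar>\<phi> F x - \<phi> F' x\<bar> + w' * \<bar>\<phi> F' x - \<phi> F' x'\<bar>"
    unfolding Phi by (rule abs_weighted_diff_le[OF w'(1) \<phi>_bounds(1)])
  have weight_term: "\<bar>w - w'\<bar> * \<phi> F x \<le> v1 * n * \<bar>w' - w\<bar>"
  proof -
    have "\<phi> F x \<le> v1 * n"
      using \<phi>_bounds(2) mult_left_mono[OF size(2) v_nonneg(1)] by linarith
    then show ?thesis
      by (metis abs_ge_zero abs_minus_commute mult.commute mult_left_mono)
  qed
  have filtration_term: "ereal (w' * \<bar>\<phi> F x - \<phi> F' x\<bar>) \<le> ereal (v3 * n / sqrt 2) * bottleneck k F' F"
  proof (rule ereal_scaled_le)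
    show "ereal \<bar>\<phi> F x - \<phi> F' x\<bar> \<le> ereal (v3 * m) * bottleneck k F' F"
      using int_stable[OF F(2) F(1) size(1) x(1)] by (simp add: abs_minus_commute m_def size(1))
    have "w' * (v3 * m) \<le> w' * (v3 * n)"
      using w'(1) v_nonneg(3) size(2) by (simp add: mult_left_mono)
    also have "\<dots> \<le> v3 * n / sqrt 2"
    proof -
      have "(w' * sqrt 2) * (v3 * n) \<le> v3 * n"
        using w' v_nonneg(3) by (intro mult_left_le_one_le) (simp_all add: n_def)
      then show ?thesis by (simp add: le_divide_eq algebra_simps)
    qed
    finally show "w' * (v3 * m) \<le> v3 * n / sqrt 2" .
  qed (use w' v_nonneg(3) bottleneck_nonneg in \<open>simp_all add: m_def\<close>)
  have point_term: "w' * \<bar>\<phi> F' x - \<phi> F' x'\<bar> \<le> v2 * n * M"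
  proof -
    have "w' * \<bar>\<phi> F' x - \<phi> F' x'\<bar> \<le> w' * (v2 * m * norm (x - x'))"
      using lipschitz[OF F(2) x] w'(1) by (simp add: mult_left_mono size(1) m_def)
    also have "\<dots> \<le> w' * (v2 * m * (sqrt 2 * M))"
      using norm_Pair_le_sqrt2_max w'(1) v_nonneg(2)
      by (intro mult_left_mono) (simp_all add: x_def x'_def M_def m_def)
    also have "\<dots> = (w' * sqrt 2) * (v2 * m * M)"
      by (simp add: algebra_simps)
    also have "\<dots> \<le> v2 * m * M"
      using w' v_nonneg(2) by (intro mult_left_le_one_le) (simp_all add: M_def m_def)
    also have "\<dots> \<le> v2 * n * M"
      using v_nonneg(2) size(2) by (intro mult_right_mono mult_left_mono) (simp_all add: M_def)
    finally show ?thesis .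
  qed
  have "ereal \<bar>Phi \<phi> X p q - Phi \<phi> X p' q'\<bar>
      \<le> ereal (\<bar>w - w'\<bar> * \<phi> F x) + ereal (w' * \<bar>\<phi> F x - \<phi> F' x\<bar>)
        + ereal (w' * \<bar>\<phi> F' x - \<phi> F' x'\<bar>)"
    using split by simp
  also have "\<dots> \<le> ereal (v1 * n * \<bar>w' - w\<bar>) + ereal (v3 * n / sqrt 2) * bottleneck k F' F
        + ereal (v2 * n * M)"
    using weight_term filtration_term point_term by (intro add_mono) simp_all
  also have "\<dots> = ereal (v3 * n / sqrt 2) * bottleneck k F' F
        + ereal (v1 * n) * ereal \<bar>w' - w\<bar> + ereal (v2 * n) * ereal M"
    by (simp add: ac_simps)
  finally show ?thesis
    unfolding F_def F'_def w_def w'_def n_def M_def .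
qed

lemma box_sq_subset_unit_square:
  assumes "i < 2^s" "j < 2^s"
  shows "box_sq s i j \<subseteq> unit_square"
proof -
  have side: "{real l / 2^s .. (real l + 1) / 2^s} \<subseteq> {0..1}" if "l < 2^s" for l
  proof -
    have "real l + 1 \<le> 2^s"
      using that by (metis Suc_leI of_nat_Suc of_nat_le_iff of_nat_numeral of_nat_power add.commute)
    then show ?thesis by simp
  qed
  show ?thesis
    unfolding box_sq_def unit_square_def by (intro Sigma_mono side assms)
qed

lemma box_center_in_box_sq: "box_center s i j \<in> box_sq s i j"
  by (simp add: box_center_def box_sq_def divide_right_mono)

lemma traverses_slice_through:
  "p \<in> B1 \<Longrightarrow> q \<in> B2 \<Longrightarrow> lt2 p q \<Longrightarrow> traverses B1 B2 (line_base p q) (line_dir p q)"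
  using slice_through_points unfolding traverses_def by blast

lemma bottleneck_le_D_box:
  "traverses B1 B2 b a \<Longrightarrow>
    bottleneck k (slice X (line_base c1 c2) (line_dir c1 c2)) (slice X b a) \<le> D_box k X B1 B2 c1 c2"
  unfolding D_box_def by (rule SUP_upper2[of "(b, a)"]) auto

lemma weight_diff_le_W_box:
  "traverses B1 B2 b a \<Longrightarrow>
    ereal \<bar>slice_weight (line_dir c1 c2) - slice_weight a\<bar> \<le> W_box B1 B2 c1 c2"
  unfolding W_box_def by (rule SUP_upper2[of "(b, a)"]) auto

lemma lam_diff_le_L_box:
  "traverses B1 B2 b a \<Longrightarrow> p \<in> Bi \<Longrightarrow> on_line b a p \<Longrightarrow>
    ereal \<bar>lam b a p - lam (line_base c1 c2) (line_dir c1 c2) ci\<bar> \<le> L_box B1 B2 Bi c1 c2 ci"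
  unfolding L_box_def by (rule SUP_upper2[of "(b, a, p)"]) auto

theorem lemma1:
  fixes \<phi> :: "(real \<Rightarrow> 'v set set) \<Rightarrow> real \<times> real \<Rightarrow> real"
    and v1 v2 v3 :: real and k :: nat
    and K :: "'v set set" and X :: "real \<times> real \<Rightarrow> 'v set set"
    and s i1 j1 i2 j2 :: nat
  assumes L2: "\<And>F. mono_filtration F \<Longrightarrow>
               set_borel_measurable lborel Delta1 (\<phi> F) \<and> set_integrable lborel Delta1 (\<lambda>x. (\<phi> F x)\<^sup>2)"
    and abs_bounded: "\<And>F x. mono_filtration F \<Longrightarrow> x \<in> Delta1 \<Longrightarrow>
               0 \<le> \<phi> F x \<and> \<phi> F x \<le> v1 * real (mf_size F)"
    and lipschitz: "\<And>F x x'. mono_filtration F \<Longrightarrow> x \<in> Delta1 \<Longrightarrow> x' \<in> Delta1 \<Longrightarrow>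
               \<bar>\<phi> F x - \<phi> F x'\<bar> \<le> v2 * real (mf_size F) * norm (x - x')"
    and int_stable: "\<And>F G x. mono_filtration F \<Longrightarrow> mono_filtration G \<Longrightarrow> mf_size F = mf_size G \<Longrightarrow>
               x \<in> Delta1 \<Longrightarrow>
               ereal \<bar>\<phi> F x - \<phi> G x\<bar> \<le> ereal (v3 * real (mf_size F)) * bottleneck k F G"
    and v_nonneg: "0 \<le> v1" "0 \<le> v2" "0 \<le> v3"
    and bif: "tame_bifiltration K X"
    and boxes: "i1 < 2^s" "j1 < 2^s" "i2 < 2^s" "j2 < 2^s"
    and centers: "lt2 (box_center s i1 j1) (box_center s i2 j2)"
  shows "\<forall>p\<in>box_sq s i1 j1. \<forall>q\<in>box_sq s i2 j2. lt2 p q \<longrightarrow>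
           ereal \<bar>Phi \<phi> X p q - Phi \<phi> X (box_center s i1 j1) (box_center s i2 j2)\<bar>
             \<le> ereal (v3 * real (bf_size K X) / sqrt 2)
                   * D_box k X (box_sq s i1 j1) (box_sq s i2 j2) (box_center s i1 j1) (box_center s i2 j2)
               + ereal (v1 * real (bf_size K X))
                   * W_box (box_sq s i1 j1) (box_sq s i2 j2) (box_center s i1 j1) (box_center s i2 j2)
               + ereal (v2 * real (bf_size K X))
                   * max (L_box (box_sq s i1 j1) (box_sq s i2 j2) (box_sq s i1 j1)
                            (box_center s i1 j1) (box_center s i2 j2) (box_center s i1 j1))
                         (L_box (box_sq s i1 j1) (box_sq s i2 j2) (box_sq s i2 j2)
                            (box_center s i1 j1) (box_center s i2 j2) (box_center s i2 j2))"
proof (intro ballI impI)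
  interpret stable_feature_map \<phi> v1 v2 v3 k
    using abs_bounded lipschitz int_stable v_nonneg by unfold_locales
  let ?B1 = "box_sq s i1 j1" and ?B2 = "box_sq s i2 j2"
    and ?c1 = "box_center s i1 j1" and ?c2 = "box_center s i2 j2"
  let ?n = "real (bf_size K X)"
  fix p q assume p: "p \<in> ?B1" and q: "q \<in> ?B2" and pq: "lt2 p q"
  let ?b = "line_base p q" and ?a = "line_dir p q"
    and ?b' = "line_base ?c1 ?c2" and ?a' = "line_dir ?c1 ?c2"
  have tr: "traverses ?B1 ?B2 ?b ?a"
    using traverses_slice_through[OF p q pq] .
  have in_R: "p \<in> unit_square" "q \<in> unit_square" "?c1 \<in> unit_square" "?c2 \<in> unit_square"
    using p q box_sq_subset_unit_square[OF boxes(1,2)] box_sq_subset_unit_square[OF boxes(3,4)]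
      box_center_in_box_sq by blast+
  have "ereal (max \<bar>lam ?b ?a p - lam ?b' ?a' ?c1\<bar> \<bar>lam ?b ?a q - lam ?b' ?a' ?c2\<bar>)
      \<le> max (L_box ?B1 ?B2 ?B1 ?c1 ?c2 ?c1) (L_box ?B1 ?B2 ?B2 ?c1 ?c2 ?c2)"
    unfolding ereal_max
    by (intro max.mono lam_diff_le_L_box[OF tr p] lam_diff_le_L_box[OF tr q]
        slice_through_points(2,3)[OF pq])
  with Phi_diff_le[OF bif pq centers in_R]
  show "ereal \<bar>Phi \<phi> X p q - Phi \<phi> X ?c1 ?c2\<bar>
      \<le> ereal (v3 * ?n / sqrt 2) * D_box k X ?B1 ?B2 ?c1 ?c2 + ereal (v1 * ?n) * W_box ?B1 ?B2 ?c1 ?c2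
        + ereal (v2 * ?n) * max (L_box ?B1 ?B2 ?B1 ?c1 ?c2 ?c1) (L_box ?B1 ?B2 ?B2 ?c1 ?c2 ?c2)"
    using v_nonneg bottleneck_le_D_box[OF tr] weight_diff_le_W_box[OF tr]
    by (elim order.trans) (intro add_mono ereal_mult_left_mono; simp)
qed

end
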